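(* Let $B\subset\mathbf{P}^2_{\mathbf{C}}$ be the real-algebraic surface defined by $x\bar y^2+y\bar z^2+z\bar x^2=0$. Then $B$ is transverse to the Jouanolou foliation $\mathcal{J}_2$, and $\mathcal{J}_2$ satisfies property $\mathcal{P}_B$; namely, for all $(x,y,z)\in\mathbf{C}^3\setminus\{0\}$, $$x\bar y^2+y\bar z^2+z\bar x^2=0\ \Longrightarrow\ 2\,|\bar x y z^2+\bar y z x^2+\bar z x y^2|<|x|^4+|y|^4+|z|^4.$$
   Context: $\mathcal{J}_2$ is the foliation of $\mathbf{P}^2_{\mathbf{C}}$ induced by the divergence-free homogeneous vector field $J_2=y^2\partial_x+z^2\partial_y+x^2\partial_z$ on $\mathbf{C}^3$ (non-vanishing on $\mathbf{C}^3\setminus\{0\}$). With $p\cdot p'=x\bar x'+y\bar y'+z\bar z'$ and $\Pi:\mathbf{C}^3\setminus\{0\}\to\mathbf{P}^2_{\mathbf{C}}$, the real field $W$ is the projection of $\mathrm{Re}(\tilde\rho J_2)$, $\tilde\rho(p)=-2(p\cdot J_2(p))/\|p\|^{4}$, tangent to $\mathcal{J}_2$ and vanishing on $B=\Pi(\{p\cdot J_2(p)=0\})$, which is the surface above. Property $\mathcal{P}_B$: $J_2$ does not vanish on $\mathbf{C}^3\setminus\{0\}$ and each $b\in B$ is a sink of the restriction of $W$ to the leaf of $\mathcal{J}_2$ through $b$. *)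

theory Defs
  imports Complex_Main
begin

definition J2 :: "complex \<times> complex \<times> complex \<Rightarrow> complex \<times> complex \<times> complex" where
  "J2 p = (case p of (x, y, z) \<Rightarrow> (y^2, z^2, x^2))"

end

theory Submission
  imports Defs
begin

text \<open>
  Put \<open>S = cnj x * y * z^2 + cnj y * z * x^2 + cnj z * x * y^2\<close> and \<open>r, s, t\<close> for the moduli of
  \<open>x, y, z\<close>. Multiplying \<open>S\<close> by \<open>cnj x * cnj y * cnj z\<close> gives a combination of the three
  monomials of the equation of \<open>B\<close> with weights \<open>r^2 t^2, r^2 s^2, s^2 t^2\<close>; on \<open>B\<close> the last monomial
  can be eliminated, leaving weights \<open>t^2 (r^2 - s^2)\<close> and \<open>s^2 (r^2 - t^2)\<close>, which are nonnegative
  once \<open>x\<close> has the largest modulus (a cyclic relabelling). The triangle inequality then bounds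
  \<open>r * cmod S\<close> by \<open>s t (r (r^2 - s^2) + s (r^2 - t^2))\<close>, and twice this is smaller than
  \<open>r (r^4 + s^4 + t^4)\<close> by an explicit sum-of-squares decomposition.
\<close>

lemma cyclic_wlog_max_norm:
  fixes P :: "'a::real_normed_vector \<Rightarrow> 'a \<Rightarrow> 'a \<Rightarrow> bool"
  assumes max: "\<And>x y z. norm y \<le> norm x \<Longrightarrow> norm z \<le> norm x \<Longrightarrow> P x y z"
    and rotate: "\<And>x y z. P x y z \<Longrightarrow> P y z x"
  shows "P x y z"
proof -
  consider "norm y \<le> norm x" "norm z \<le> norm x"
    | "norm x \<le> norm y" "norm z \<le> norm y"
    | "norm x \<le> norm z" "norm y \<le> norm z"
    by linarith
  then show ?thesis
    by cases (use max rotate in blast)+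
qed

lemma sink_polynomial_bound:
  fixes r s t :: real
  assumes "r > 0" "s \<ge> 0" "t \<ge> 0"
  shows "2 * s * t * (r * (r^2 - s^2) + s * (r^2 - t^2)) < r * (r^4 + s^4 + t^4)"
proof -
  have sos: "r * (r^4 + s^4 + t^4) - 2 * s * t * (r * (r^2 - s^2) + s * (r^2 - t^2))
      = r * ((r^2 - 5/4 * (s * t))^2 + 7/16 * (s * t)^2) + r * (s^2 - t^2)^2
        + 2 * r * (s * t) * (r/2 - s)^2 + 2 * s^2 * t^3"
    by (simp add: algebra_simps power2_eq_square power3_eq_cube power4_eq_xxxx)
  have "(r^2 - 5/4 * (s * t))^2 + 7/16 * (s * t)^2 > 0"
  proof (cases "s * t = 0")
    case True
    show ?thesis
      using \<open>r > 0\<close> by (simp add: True)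
  qed (simp add: add_nonneg_pos)
  then have "r * ((r^2 - 5/4 * (s * t))^2 + 7/16 * (s * t)^2) > 0"
    using \<open>r > 0\<close> by simp
  moreover have "r * (s^2 - t^2)^2 + 2 * r * (s * t) * (r/2 - s)^2 + 2 * s^2 * t^3 \<ge> 0"
    using assms by simp
  ultimately show ?thesis
    using sos by linarith
qed

lemma norm_sink_form_bound_on_B:
  fixes x y z :: complex
  assumes on_B: "x * cnj y ^ 2 + y * cnj z ^ 2 + z * cnj x ^ 2 = 0"
    and "cmod y \<le> cmod x" "cmod z \<le> cmod x"
  shows "cmod x * cmod y * cmod z * cmod (cnj x * y * z ^ 2 + cnj y * z * x ^ 2 + cnj z * x * y ^ 2)
    \<le> (cmod y * cmod z)^2 * (cmod x * (cmod x^2 - cmod y^2) + cmod y * (cmod x^2 - cmod z^2))"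
proof -
  define r s t where "r = cmod x" and "s = cmod y" and "t = cmod z"
  define S where "S = cnj x * y * z ^ 2 + cnj y * z * x ^ 2 + cnj z * x * y ^ 2"
  have weights: "cnj x * cnj y * cnj z * S = of_real (r^2 * t^2) * (x * cnj y ^ 2)
      + of_real (r^2 * s^2) * (y * cnj z ^ 2) + of_real (s^2 * t^2) * (z * cnj x ^ 2)"
    unfolding S_def r_def s_def t_def of_real_mult complex_norm_square by algebra
  have eliminated: "cnj x * cnj y * cnj z * S = of_real (t^2 * (r^2 - s^2)) * (x * cnj y ^ 2)
      + of_real (s^2 * (r^2 - t^2)) * (y * cnj z ^ 2)"
    using on_B unfolding weights of_real_mult of_real_diff by algebra
  have "s^2 \<le> r^2" "t^2 \<le> r^2"
    using assms(2,3) by (simp_all add: r_def s_def t_def power_mono)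
  then have weights_nonneg: "t^2 * (r^2 - s^2) \<ge> 0" "s^2 * (r^2 - t^2) \<ge> 0"
    by simp_all
  have "r * s * t * cmod S = cmod (cnj x * cnj y * cnj z * S)"
    by (simp add: norm_mult r_def s_def t_def)
  also have "\<dots> \<le> t^2 * (r^2 - s^2) * (r * s^2) + s^2 * (r^2 - t^2) * (s * t^2)"
    unfolding eliminated using weights_nonneg
    by (intro norm_triangle_le add_mono)
      (simp_all only: norm_mult norm_of_real abs_of_nonneg norm_power complex_mod_cnj
        flip: r_def s_def t_def)
  also have "\<dots> = (s * t)^2 * (r * (r^2 - s^2) + s * (r^2 - t^2))"
    by (simp add: algebra_simps power2_eq_square)
  finally show ?thesis
    unfolding r_def s_def t_def S_def .
qed

lemma sink_inequality_max_modulus: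
  fixes x y z :: complex
  assumes "x \<noteq> 0"
    and on_B: "x * cnj y ^ 2 + y * cnj z ^ 2 + z * cnj x ^ 2 = 0"
    and "cmod y \<le> cmod x" "cmod z \<le> cmod x"
  shows "2 * cmod (cnj x * y * z ^ 2 + cnj y * z * x ^ 2 + cnj z * x * y ^ 2)
    < cmod x ^ 4 + cmod y ^ 4 + cmod z ^ 4"
proof (cases "y = 0 \<or> z = 0")
  case True
  then show ?thesis
    using \<open>x \<noteq> 0\<close> by (auto simp: add_pos_nonneg)
next
  case False
  define r s t where "r = cmod x" and "s = cmod y" and "t = cmod z"
  define S where "S = cnj x * y * z ^ 2 + cnj y * z * x ^ 2 + cnj z * x * y ^ 2"
  have pos: "r > 0" "s > 0" "t > 0"
    using False \<open>x \<noteq> 0\<close> by (simp_all add: r_def s_def t_def)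
  have "(r * s * t) * (2 * cmod S) \<le> (s * t) * (2 * s * t * (r * (r^2 - s^2) + s * (r^2 - t^2)))"
    using norm_sink_form_bound_on_B [OF on_B assms(3,4)]
    by (simp add: r_def s_def t_def S_def power2_eq_square algebra_simps)
  also have "\<dots> < (s * t) * (r * (r^4 + s^4 + t^4))"
    using pos by (intro mult_strict_left_mono sink_polynomial_bound) simp_all
  finally have "(r * s * t) * (2 * cmod S) < (r * s * t) * (r^4 + s^4 + t^4)"
    by (simp only: ac_simps)
  then show ?thesis
    using pos by (simp add: r_def s_def t_def S_def)
qed

lemma sink_inequality_on_B:
  fixes x y z :: complex
  assumes "(x, y, z) \<noteq> (0, 0, 0)"
    and "x * cnj y ^ 2 + y * cnj z ^ 2 + z * cnj x ^ 2 = 0"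
  shows "2 * cmod (cnj x * y * z ^ 2 + cnj y * z * x ^ 2 + cnj z * x * y ^ 2)
    < cmod x ^ 4 + cmod y ^ 4 + cmod z ^ 4"
proof -
  let ?P = "\<lambda>x y z :: complex. (x, y, z) \<noteq> (0, 0, 0) \<longrightarrow>
    x * cnj y ^ 2 + y * cnj z ^ 2 + z * cnj x ^ 2 = 0 \<longrightarrow>
      2 * cmod (cnj x * y * z ^ 2 + cnj y * z * x ^ 2 + cnj z * x * y ^ 2)
        < cmod x ^ 4 + cmod y ^ 4 + cmod z ^ 4"
  have "?P x y z"
  proof (rule cyclic_wlog_max_norm [of ?P])
    fix x y z :: complex
    assume "norm y \<le> norm x" "norm z \<le> norm x"
    moreover have "x \<noteq> 0" if "(x, y, z) \<noteq> (0, 0, 0)"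
      using that calculation by auto
    ultimately show "?P x y z"
      using sink_inequality_max_modulus by blast
  next
    fix x y z :: complex
    assume "?P x y z"
    then show "?P y z x"
      by (simp add: add.commute add.left_commute conj_commute)
  qed
  then show ?thesis
    using assms by blast
qed

theorem proposition12p3:
  fixes x y z :: complex
  assumes "(x, y, z) \<noteq> (0, 0, 0)"
  shows "J2 (x, y, z) \<noteq> (0, 0, 0) \<and>
    (x * cnj y ^ 2 + y * cnj z ^ 2 + z * cnj x ^ 2 = 0 \<longrightarrow>
      2 * cmod (cnj x * y * z ^ 2 + cnj y * z * x ^ 2 + cnj z * x * y ^ 2)
        < cmod x ^ 4 + cmod y ^ 4 + cmod z ^ 4)"
  using assms sink_inequality_on_B by (auto simp: J2_def)

end
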